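(* Let $N\ge 1$, let $\lambda_0,\dots,\lambda_N>0$ be positive real numbers and let $\gamma_0,\dots,\gamma_N\in\mathbb{C}$ be distinct complex numbers. Let $S\subset \mathbb{P}^1\times\mathbb{P}^1$ be the curve of bidegree $(N,N)$ defined in affine coordinates $(\eta,\zeta)$ by $$p(\eta,\zeta)=\sum_{i=0}^N \lambda_i^2\prod_{\substack{j=0\\ j\neq i}}^N(\zeta-\gamma_j)(1+\eta\bar\gamma_j)=0 .$$ Let $s$ be the global meromorphic section of the line bundle $\mathcal{O}(N+1,-N-1)$ on $\mathbb{P}^1\times\mathbb{P}^1$ given in affine coordinates by $$s(\eta,\zeta)=\frac{\prod_{i=0}^N(\zeta-\gamma_i)}{\prod_{i=0}^N(1+\eta\bar\gamma_i)} .$$ Then the restriction of $s$ to $S$ is non-vanishing, i.e. it is a holomorphic section of $\mathcal{O}(N+1,-N-1)|_S$ with no zeros (and no poles) on $S$.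
   Context: $\mathbb{P}^1\times\mathbb{P}^1$ has affine coordinates $(\eta,\zeta)$; $\mathcal{O}(a,b)$ denotes the line bundle $\pi_1^*\mathcal{O}(a)\otimes\pi_2^*\mathcal{O}(b)$, where $\pi_1$ is projection to the $\eta$-factor and $\pi_2$ to the $\zeta$-factor. The data $(\lambda_i,\gamma_i)$ are called JNR data and $S$ is the JNR spectral curve. *)

theory Defs
  imports "HOL-Analysis.Analysis"
begin

text \<open>Homogeneous coordinates on P^1 x P^1: a point is represented by a pair
  (a, b) of nonzero vectors a = (a0, a1), b = (b0, b1) in C^2, with affine
  coordinates eta = a1/a0 and zeta = b1/b0.  All polynomials below are the
  bihomogenisations of the affine expressions of the paper, so they make sense
  at the points at infinity as well.\<close>

definition JNR_p :: "nat \<Rightarrow> (nat \<Rightarrow> real) \<Rightarrow> (nat \<Rightarrow> complex)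
    \<Rightarrow> complex \<times> complex \<Rightarrow> complex \<times> complex \<Rightarrow> complex" where
  "JNR_p N lam gam a b =
     (\<Sum>i\<in>{0..N}. complex_of_real ((lam i)\<^sup>2) *
        (\<Prod>j\<in>{0..N} - {i}. (snd b - gam j * fst b) * (fst a + snd a * cnj (gam j))))"

text \<open>The affine cone over S inside (C^2 - 0) x (C^2 - 0).\<close>
definition JNR_cone :: "nat \<Rightarrow> (nat \<Rightarrow> real) \<Rightarrow> (nat \<Rightarrow> complex)
    \<Rightarrow> ((complex \<times> complex) \<times> (complex \<times> complex)) set" where
  "JNR_cone N lam gam = {(a, b). a \<noteq> 0 \<and> b \<noteq> 0 \<and> JNR_p N lam gam a b = 0}"

text \<open>The quotient
  is bihomogeneous of bidegree (-(N+1), N+1) and represents the meromorphic section s.\<close>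
definition JNR_s_num :: "nat \<Rightarrow> (nat \<Rightarrow> complex) \<Rightarrow> complex \<times> complex \<Rightarrow> complex" where
  "JNR_s_num N gam b = (\<Prod>i\<in>{0..N}. snd b - gam i * fst b)"

definition JNR_s_den :: "nat \<Rightarrow> (nat \<Rightarrow> complex) \<Rightarrow> complex \<times> complex \<Rightarrow> complex" where
  "JNR_s_den N gam a = (\<Prod>i\<in>{0..N}. fst a + snd a * cnj (gam i))"

definition JNR_s :: "nat \<Rightarrow> (nat \<Rightarrow> complex)
    \<Rightarrow> (complex \<times> complex) \<times> (complex \<times> complex) \<Rightarrow> complex" where
  "JNR_s N gam x = JNR_s_num N gam (snd x) / JNR_s_den N gam (fst x)"

end

theory Submission
  imports Defs
begin

text \<open>Write \<open>Z_j = zeta - gamma_j\<close> and \<open>W_j = 1 + eta cnj(gamma_j)\<close> (homogenised), so that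
  \<open>p = sum_i lambda_i^2 prod_{j ~= i} Z_j W_j\<close> and \<open>s = prod_j Z_j / prod_j W_j\<close>.
  As the \<open>gamma_j\<close> are distinct, at most one \<open>Z_j\<close> and at most one \<open>W_j\<close> vanish at a
  point. If \<open>Z_k\<close> vanishes at a point of \<open>S\<close>, then \<open>p\<close> reduces there to
  \<open>lambda_k^2 prod_{j ~= k} Z_j W_j\<close>, so some \<open>W_l\<close> with \<open>l ~= k\<close> vanishes as well, and
  symmetrically. Away from such crossing points \<open>s\<close> is a quotient of nonvanishing
  polynomials. At a crossing point \<open>p = lambda_k^2 W_l A + Z_k D\<close> with \<open>A, D\<close> nonzero nearby,
  so on \<open>S\<close> the zero \<open>Z_k = - lambda_k^2 W_l A / D\<close> of the numerator cancels the zero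
  \<open>W_l\<close> of the denominator.\<close>

lemma sum_prod_except_eq_single:
  fixes c F :: "'i \<Rightarrow> 'a::comm_semiring_1"
  assumes "finite I" "k \<in> I" "F k = 0"
  shows "(\<Sum>i\<in>I. c i * (\<Prod>j\<in>I-{i}. F j)) = c k * (\<Prod>j\<in>I-{k}. F j)"
proof -
  have "(\<Prod>j\<in>I-{i}. F j) = 0" if "i \<in> I - {k}" for i
    using assms that by (intro prod_zero) auto
  then show ?thesis
    using assms by (simp add: sum.remove)
qed

lemma sum_prod_except_split_two:
  fixes c Z W :: "'i \<Rightarrow> 'a::comm_semiring_1"
  assumes "finite I" "k \<in> I" "l \<in> I" "k \<noteq> l"
  shows "(\<Sum>i\<in>I. c i * (\<Prod>j\<in>I-{i}. Z j * W j)) =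
    c k * W l * ((\<Prod>j\<in>I-{k}. Z j) * (\<Prod>j\<in>I-{k,l}. W j)) +
    Z k * (c l * ((\<Prod>j\<in>I-{l,k}. Z j) * (\<Prod>j\<in>I-{l}. W j)) +
      W l * (\<Sum>i\<in>I-{k,l}. c i * ((\<Prod>j\<in>I-{i,k}. Z j) * (\<Prod>j\<in>I-{i,l}. W j))))"
proof -
  have pull: "(\<Prod>j\<in>I-{n}. F j) = F m * (\<Prod>j\<in>I-{n,m}. F j)"
    if "m \<in> I" "m \<noteq> n" for m n and F :: "'i \<Rightarrow> 'a"
  proof -
    have "I - {n} - {m} = I - {n,m}" by auto
    then show ?thesis using that assms(1) prod.remove[of "I-{n}" m F] by simp
  qed
  have "(\<Sum>i\<in>I. c i * (\<Prod>j\<in>I-{i}. Z j * W j)) =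
      c k * (\<Prod>j\<in>I-{k}. Z j * W j) + (\<Sum>i\<in>I-{k}. c i * (\<Prod>j\<in>I-{i}. Z j * W j))"
    using assms by (intro sum.remove) auto
  also have "(\<Sum>i\<in>I-{k}. c i * (\<Prod>j\<in>I-{i}. Z j * W j)) =
      c l * (\<Prod>j\<in>I-{l}. Z j * W j) + (\<Sum>i\<in>I-{k}-{l}. c i * (\<Prod>j\<in>I-{i}. Z j * W j))"
    using assms by (intro sum.remove) auto
  also have "I - {k} - {l} = I - {k,l}"
    by auto
  also have "(\<Sum>i\<in>I-{k,l}. c i * (\<Prod>j\<in>I-{i}. Z j * W j)) =
      Z k * W l * (\<Sum>i\<in>I-{k,l}. c i * ((\<Prod>j\<in>I-{i,k}. Z j) * (\<Prod>j\<in>I-{i,l}. W j)))"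
    unfolding sum_distrib_left
    by (rule sum.cong) (use assms in \<open>auto simp: prod.distrib pull[of k _ Z] pull[of l _ W] ac_simps\<close>)
  finally show ?thesis
    using assms by (simp add: prod.distrib pull[of l k W] pull[of k l Z] algebra_simps)
qed

lemma sum_prod_except_eq_0_partner:
  fixes c Z W :: "'i \<Rightarrow> 'a::idom"
  assumes "finite I" "k \<in> I" "\<forall>i\<in>I. c i \<noteq> 0"
    and "(\<Sum>i\<in>I. c i * (\<Prod>j\<in>I-{i}. Z j * W j)) = 0"
    and "Z k = 0" "\<forall>j\<in>I-{k}. Z j \<noteq> 0"
  shows "\<exists>l\<in>I-{k}. W l = 0"
proof -
  have "c k * (\<Prod>j\<in>I-{k}. Z j * W j) = 0"
    using assms sum_prod_except_eq_single[of I k "\<lambda>j. Z j * W j" c] by simp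
  then have "(\<Prod>j\<in>I-{k}. Z j * W j) = 0"
    using assms by simp
  then show ?thesis
    using assms by auto
qed

lemma prod_ratio_tendsto_on_zero_set:
  fixes Z W :: "'i \<Rightarrow> 'b::t2_space \<Rightarrow> 'a::real_normed_field" and c :: "'i \<Rightarrow> 'a"
  assumes I: "finite I" "k \<in> I" "l \<in> I" "k \<noteq> l" and c: "\<forall>i\<in>I. c i \<noteq> 0"
    and cont: "\<forall>j\<in>I. isCont (Z j) x \<and> isCont (W j) x"
    and "Z k x = 0" "W l x = 0"
    and Z: "\<forall>j\<in>I-{k}. Z j x \<noteq> 0" and W: "\<forall>j\<in>I-{l}. W j x \<noteq> 0"
  shows "\<exists>L. L \<noteq> 0 \<and> ((\<lambda>y. (\<Prod>j\<in>I. Z j y) / (\<Prod>j\<in>I. W j y)) \<longlongrightarrow> L)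
           (at x within {y. (\<Sum>i\<in>I. c i * (\<Prod>j\<in>I-{i}. Z j y * W j y)) = 0
                            \<and> (\<Prod>j\<in>I. W j y) \<noteq> 0})"
    (is "\<exists>L. L \<noteq> 0 \<and> (?s \<longlongrightarrow> L) (at x within ?S)")
proof -
  define A where "A y = (\<Prod>j\<in>I-{k}. Z j y) * (\<Prod>j\<in>I-{k,l}. W j y)" for y
  define D where "D y = c l * ((\<Prod>j\<in>I-{l,k}. Z j y) * (\<Prod>j\<in>I-{l}. W j y)) +
      W l y * (\<Sum>i\<in>I-{k,l}. c i * ((\<Prod>j\<in>I-{i,k}. Z j y) * (\<Prod>j\<in>I-{i,l}. W j y)))" for y
  define g where "g y = - c k * A y * (\<Prod>j\<in>I-{k}. Z j y) / (D y * (\<Prod>j\<in>I-{l}. W j y))" for y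
  have "(\<Prod>j\<in>I-{k}. Z j x) \<noteq> 0" "(\<Prod>j\<in>I-{l,k}. Z j x) \<noteq> 0"
    "(\<Prod>j\<in>I-{l}. W j x) \<noteq> 0" "(\<Prod>j\<in>I-{k,l}. W j x) \<noteq> 0"
    using I(1) Z W by (simp_all add: prod_zero_iff)
  then have "D x \<noteq> 0" "A x \<noteq> 0"
    using I c \<open>W l x = 0\<close> by (simp_all add: D_def A_def)
  then have "g x \<noteq> 0"
    using I c \<open>(\<Prod>j\<in>I-{k}. Z j x) \<noteq> 0\<close> \<open>(\<Prod>j\<in>I-{l}. W j x) \<noteq> 0\<close> by (simp add: g_def)
  have "isCont D x"
    unfolding D_def using cont I by (intro continuous_intros) auto
  then have "isCont g x"
    unfolding g_def A_def using cont I \<open>D x \<noteq> 0\<close> \<open>(\<Prod>j\<in>I-{l}. W j x) \<noteq> 0\<close>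
    by (intro continuous_intros) auto
  have ratio_eq: "?s y = g y" if "y \<in> ?S" "D y \<noteq> 0" for y
  proof -
    have "c k * W l y * A y + Z k y * D y = 0"
      using that sum_prod_except_split_two[OF I, of c "\<lambda>j. Z j y" "\<lambda>j. W j y"]
      by (simp add: A_def D_def)
    then have Zk: "Z k y = - c k * W l y * A y / D y"
      using \<open>D y \<noteq> 0\<close> by (simp add: field_simps add_eq_0_iff)
    have W_split: "(\<Prod>j\<in>I. W j y) = W l y * (\<Prod>j\<in>I-{l}. W j y)"
      using I prod.remove[of I l "\<lambda>j. W j y"] by simp
    then have "W l y \<noteq> 0" "(\<Prod>j\<in>I-{l}. W j y) \<noteq> 0"
      using that(1) by auto
    have "?s y = Z k y * (\<Prod>j\<in>I-{k}. Z j y) / (W l y * (\<Prod>j\<in>I-{l}. W j y))"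
      using I prod.remove[of I k "\<lambda>j. Z j y"] W_split by simp
    also have "\<dots> = g y"
      unfolding Zk g_def using \<open>W l y \<noteq> 0\<close> \<open>D y \<noteq> 0\<close> by (simp add: field_simps)
    finally show ?thesis .
  qed
  have "(D \<longlongrightarrow> D x) (at x within ?S)" "(g \<longlongrightarrow> g x) (at x within ?S)"
    using \<open>isCont D x\<close> \<open>isCont g x\<close> by (auto simp: isCont_def intro: tendsto_within_subset)
  have "\<forall>\<^sub>F y in at x within ?S. D y \<noteq> 0"
    using tendsto_imp_eventually_ne[OF \<open>(D \<longlongrightarrow> D x) (at x within ?S)\<close> \<open>D x \<noteq> 0\<close>] .
  moreover have "\<forall>\<^sub>F y in at x within ?S. y \<in> ?S"
    by (simp add: eventually_at_filter)
  ultimately have "\<forall>\<^sub>F y in at x within ?S. g y = ?s y"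
    by eventually_elim (simp add: ratio_eq)
  with \<open>(g \<longlongrightarrow> g x) (at x within ?S)\<close> have "(?s \<longlongrightarrow> g x) (at x within ?S)"
    by (rule Lim_transform_eventually)
  with \<open>g x \<noteq> 0\<close> show ?thesis
    by blast
qed

definition JNR_num_factor :: "(nat \<Rightarrow> complex) \<Rightarrow> nat \<Rightarrow> complex \<times> complex \<Rightarrow> complex" where
  "JNR_num_factor gam j b = snd b - gam j * fst b"

definition JNR_den_factor :: "(nat \<Rightarrow> complex) \<Rightarrow> nat \<Rightarrow> complex \<times> complex \<Rightarrow> complex" where
  "JNR_den_factor gam j a = fst a + snd a * cnj (gam j)"

lemma JNR_factorisations:
  shows "JNR_p N lam gam a b = (\<Sum>i\<in>{0..N}. complex_of_real ((lam i)\<^sup>2) *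
           (\<Prod>j\<in>{0..N}-{i}. JNR_num_factor gam j b * JNR_den_factor gam j a))"
    and "JNR_s_num N gam b = (\<Prod>j\<in>{0..N}. JNR_num_factor gam j b)"
    and "JNR_s_den N gam a = (\<Prod>j\<in>{0..N}. JNR_den_factor gam j a)"
    and "JNR_s N gam x =
           (\<Prod>j\<in>{0..N}. JNR_num_factor gam j (snd x)) / (\<Prod>j\<in>{0..N}. JNR_den_factor gam j (fst x))"
  by (simp_all add: JNR_p_def JNR_s_def JNR_s_num_def JNR_s_den_def JNR_num_factor_def JNR_den_factor_def)

lemma JNR_num_factor_eq_0_unique:
  assumes "b \<noteq> 0" "inj_on gam I" "j \<in> I" "k \<in> I"
    and "JNR_num_factor gam j b = 0" "JNR_num_factor gam k b = 0"
  shows "j = k"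
proof -
  obtain b0 b1 where b: "b = (b0, b1)"
    by fastforce
  have "b1 = gam j * b0" "b1 = gam k * b0"
    using assms(5,6) by (simp_all add: b JNR_num_factor_def)
  moreover have "b0 \<noteq> 0"
    using calculation assms(1) by (auto simp: b zero_prod_def)
  ultimately have "gam j = gam k"
    by simp
  with assms(2-4) show ?thesis
    by (simp add: inj_on_eq_iff)
qed

lemma JNR_den_factor_eq_0_unique:
  assumes "a \<noteq> 0" "inj_on gam I" "j \<in> I" "k \<in> I"
    and "JNR_den_factor gam j a = 0" "JNR_den_factor gam k a = 0"
  shows "j = k"
proof -
  obtain a0 a1 where a: "a = (a0, a1)"
    by fastforce
  have "a0 = - a1 * cnj (gam j)" "a0 = - a1 * cnj (gam k)"
    using assms(5,6) by (simp_all add: a JNR_den_factor_def add_eq_0_iff)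
  moreover have "a1 \<noteq> 0"
    using calculation assms(1) by (auto simp: a zero_prod_def)
  ultimately have "gam j = gam k"
    by simp
  with assms(2-4) show ?thesis
    by (simp add: inj_on_eq_iff)
qed

lemma JNR_cone_regular_or_crossing:
  assumes lam: "\<forall>i\<in>{0..N}. lam i > 0" and inj: "inj_on gam {0..N}"
    and x: "x \<in> JNR_cone N lam gam"
  defines "Z j \<equiv> JNR_num_factor gam j (snd x)" and "W j \<equiv> JNR_den_factor gam j (fst x)"
  obtains (regular) "\<forall>j\<in>{0..N}. Z j \<noteq> 0 \<and> W j \<noteq> 0"
    | (crossing) k l where "k \<in> {0..N}" "l \<in> {0..N}" "k \<noteq> l" "Z k = 0" "W l = 0"
        "\<forall>j\<in>{0..N}-{k}. Z j \<noteq> 0" "\<forall>j\<in>{0..N}-{l}. W j \<noteq> 0"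
proof -
  define c where "c i = complex_of_real ((lam i)\<^sup>2)" for i
  have "fst x \<noteq> 0" "snd x \<noteq> 0" "JNR_p N lam gam (fst x) (snd x) = 0"
    using x by (auto simp: JNR_cone_def)
  then have p: "(\<Sum>i\<in>{0..N}. c i * (\<Prod>j\<in>{0..N}-{i}. Z j * W j)) = 0"
    by (simp add: JNR_factorisations c_def Z_def W_def)
  then have p': "(\<Sum>i\<in>{0..N}. c i * (\<Prod>j\<in>{0..N}-{i}. W j * Z j)) = 0"
    by (simp only: mult.commute[of "W _"])
  have Z_unique: "\<forall>j\<in>{0..N}-{k}. Z j \<noteq> 0" if "k \<in> {0..N}" "Z k = 0" for k
    using that JNR_num_factor_eq_0_unique[OF \<open>snd x \<noteq> 0\<close> inj] by (auto simp: Z_def)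
  have W_unique: "\<forall>j\<in>{0..N}-{l}. W j \<noteq> 0" if "l \<in> {0..N}" "W l = 0" for l
    using that JNR_den_factor_eq_0_unique[OF \<open>fst x \<noteq> 0\<close> inj] by (auto simp: W_def)
  have c: "\<forall>i\<in>{0..N}. c i \<noteq> 0"
    using lam by (auto simp: c_def)
  consider (num_zero) k where "k \<in> {0..N}" "Z k = 0"
    | (den_zero) l where "l \<in> {0..N}" "W l = 0"
    | "\<forall>j\<in>{0..N}. Z j \<noteq> 0 \<and> W j \<noteq> 0"
    by blast
  then show ?thesis
  proof cases
    case num_zero
    obtain l where "l \<in> {0..N}" "l \<noteq> k" "W l = 0"
      using sum_prod_except_eq_0_partner[OF finite_atLeastAtMost num_zero(1) c p num_zero(2)
          Z_unique[OF num_zero]]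
      by blast
    then show ?thesis
      using crossing[of k l] num_zero Z_unique[OF num_zero] W_unique by blast
  next
    case den_zero
    obtain k where "k \<in> {0..N}" "k \<noteq> l" "Z k = 0"
      using sum_prod_except_eq_0_partner[OF finite_atLeastAtMost den_zero(1) c p' den_zero(2)
          W_unique[OF den_zero]]
      by blast
    then show ?thesis
      using crossing[of k l] den_zero Z_unique W_unique[OF den_zero] by blast
  qed (rule regular)
qed

lemma JNR_s_tendsto_at_crossing:
  assumes lam: "\<forall>i\<in>{0..N}. lam i > 0"
    and "k \<in> {0..N}" "l \<in> {0..N}" "k \<noteq> l"
    and "JNR_num_factor gam k (snd x) = 0" "JNR_den_factor gam l (fst x) = 0"
    and "\<forall>j\<in>{0..N}-{k}. JNR_num_factor gam j (snd x) \<noteq> 0"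
    and "\<forall>j\<in>{0..N}-{l}. JNR_den_factor gam j (fst x) \<noteq> 0"
  shows "\<exists>L. L \<noteq> 0 \<and>
    (JNR_s N gam \<longlongrightarrow> L) (at x within {y \<in> JNR_cone N lam gam. JNR_s_den N gam (fst y) \<noteq> 0})"
proof -
  define Z where "Z j y = JNR_num_factor gam j (snd y)"
    for j and y :: "(complex \<times> complex) \<times> complex \<times> complex"
  define W where "W j y = JNR_den_factor gam j (fst y)"
    for j and y :: "(complex \<times> complex) \<times> complex \<times> complex"
  define c where "c i = complex_of_real ((lam i)\<^sup>2)" for i
  let ?ratio = "\<lambda>y. (\<Prod>j\<in>{0..N}. Z j y) / (\<Prod>j\<in>{0..N}. W j y)"
  let ?S = "{y. (\<Sum>i\<in>{0..N}. c i * (\<Prod>j\<in>{0..N}-{i}. Z j y * W j y)) = 0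
              \<and> (\<Prod>j\<in>{0..N}. W j y) \<noteq> 0}"
  have "Z k x = 0" "W l x = 0" "\<forall>j\<in>{0..N}-{k}. Z j x \<noteq> 0" "\<forall>j\<in>{0..N}-{l}. W j x \<noteq> 0"
    using assms(5-) by (simp_all add: Z_def W_def)
  moreover have "\<forall>j\<in>{0..N}. isCont (Z j) x \<and> isCont (W j) x"
    unfolding Z_def W_def JNR_num_factor_def JNR_den_factor_def by (auto intro!: continuous_intros)
  moreover have "\<forall>i\<in>{0..N}. c i \<noteq> 0"
    using lam by (auto simp: c_def)
  ultimately have "\<exists>L. L \<noteq> 0 \<and> (?ratio \<longlongrightarrow> L) (at x within ?S)"
    using assms(2-4) by (intro prod_ratio_tendsto_on_zero_set) auto
  then obtain L where "L \<noteq> 0" and lim: "(?ratio \<longlongrightarrow> L) (at x within ?S)"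
    by blast
  have "{y \<in> JNR_cone N lam gam. JNR_s_den N gam (fst y) \<noteq> 0} \<subseteq> ?S"
    by (auto simp: JNR_cone_def JNR_factorisations c_def Z_def W_def)
  moreover have "JNR_s N gam = ?ratio"
    by (simp add: fun_eq_iff JNR_factorisations Z_def W_def)
  ultimately show ?thesis
    using tendsto_within_subset[OF lim] \<open>L \<noteq> 0\<close> by auto
qed

theorem mainTheorem1:
  fixes N :: nat and lam :: "nat \<Rightarrow> real" and gam :: "nat \<Rightarrow> complex"
  assumes "N \<ge> 1"
    and "\<forall>i\<in>{0..N}. lam i > 0"
    and "inj_on gam {0..N}"
  shows "\<forall>x\<in>JNR_cone N lam gam. \<exists>c. c \<noteq> 0 \<and>
           (JNR_s N gam \<longlongrightarrow> c)
             (at x within {y \<in> JNR_cone N lam gam. JNR_s_den N gam (fst y) \<noteq> 0})"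
proof
  fix x assume x: "x \<in> JNR_cone N lam gam"
  show "\<exists>c. c \<noteq> 0 \<and> (JNR_s N gam \<longlongrightarrow> c)
          (at x within {y \<in> JNR_cone N lam gam. JNR_s_den N gam (fst y) \<noteq> 0})"
  proof (cases rule: JNR_cone_regular_or_crossing[OF assms(2,3) x, case_names regular crossing])
    case regular
    then have "isCont (JNR_s N gam) x" "JNR_s N gam x \<noteq> 0"
      unfolding JNR_factorisations(4)[abs_def]
      by (auto simp: JNR_num_factor_def JNR_den_factor_def intro!: continuous_intros)
    then show ?thesis
      by (auto simp: isCont_def intro: tendsto_within_subset)
  next
    case (crossing k l)
    then show ?thesis
      by (rule JNR_s_tendsto_at_crossing[OF assms(2)])
  qed
qed

end
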